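(* Let $(E_i(0),\,i\in\mathcal S)$ be any initial energy configuration with $0\le E_i(0)\le\overline E_i$. Let $\mathcal S'=\{i\in\mathcal S:E_i(0)<\overline E_i\}$ and $u_0=\min_{i\in\mathcal S'}E_i(0)/P_i$ (with $u_0=\infty$ if $\mathcal S'=\emptyset$). Let $\mathcal S_1=\{i\in\mathcal S:\overline E_i/P_i\le u_0\}$, $\mathcal S_2=\mathcal S\setminus\mathcal S_1$, and $k=\sum_{i\in\mathcal S_2}P_i$. Let $T>0$ and let $(d(t),\,t\in[0,T])$ be a nonnegative, integrable, weakly increasing demand function with $d(0)\ge k$. If some cross-charging policy completely serves $d$ on $[0,T]$ from this initial configuration, then $d$ can also be completely served on $[0,T]$ from this initial configuration by a policy without cross-charging.
   Context: A finite set $\mathcal S$ of energy stores is given. Store $i\in\mathcal S$ has capacity $\overline E_i>0$, maximum discharge rate $P_i>0$, maximum charge rate $P'_i\ge0$ and round-trip efficiency $\eta_i\in(0,1]$. A cross-charging policy is a choice of measurable rate functions $(r_i(t),\,t\ge0)$ with $E_i(t)=E_i(0)-\int_0^t r_i(u)\,du$, subject to $0\le E_i(t)\le\overline E_i$, $-P'_i\le r_i(t)\le P_i$, and $$0\le\sum_{i:\,r_i(t)\ge0}r_i(t)+\sum_{i:\,r_i(t)<0}r_i(t)/\eta_i\le d(t)\quad\text{for all }t$$ (negative $r_i$ means store $i$ is charged, drawing energy at rate $-r_i/\eta_i$ from other stores; no external energy is available). It completely serves $d$ on an interval $I$ if the middle expression equals $d(t)$ for almost every $t\in I$. A policy with all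 $r_i(t)\ge0$ is one without cross-charging. *)

theory Defs
  imports "HOL-Analysis.Analysis"
begin

definition energy :: "('a \<Rightarrow> real) \<Rightarrow> ('a \<Rightarrow> real \<Rightarrow> real) \<Rightarrow> 'a \<Rightarrow> real \<Rightarrow> real" where
  "energy E0 r i t = E0 i - integral {0..t} (r i)"

definition served :: "'a set \<Rightarrow> ('a \<Rightarrow> real) \<Rightarrow> ('a \<Rightarrow> real \<Rightarrow> real) \<Rightarrow> real \<Rightarrow> real" where
  "served S eta r t = (\<Sum>i\<in>S. if r i t \<ge> 0 then r i t else r i t / eta i)"

definition policy ::
  "'a set \<Rightarrow> ('a \<Rightarrow> real) \<Rightarrow> ('a \<Rightarrow> real) \<Rightarrow> ('a \<Rightarrow> real) \<Rightarrow> ('a \<Rightarrow> real)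
   \<Rightarrow> ('a \<Rightarrow> real) \<Rightarrow> (real \<Rightarrow> real) \<Rightarrow> real \<Rightarrow> ('a \<Rightarrow> real \<Rightarrow> real) \<Rightarrow> bool" where
  "policy S Ebar P P' eta E0 d T r \<longleftrightarrow>
     (\<forall>i\<in>S. r i \<in> borel_measurable lebesgue) \<and>
     (\<forall>i\<in>S. \<forall>t\<in>{0..T}. 0 \<le> energy E0 r i t \<and> energy E0 r i t \<le> Ebar i) \<and>
     (\<forall>i\<in>S. \<forall>t\<in>{0..T}. - P' i \<le> r i t \<and> r i t \<le> P i) \<and>
     (\<forall>t\<in>{0..T}. 0 \<le> served S eta r t \<and> served S eta r t \<le> d t)"

definition completely_serves ::
  "'a set \<Rightarrow> ('a \<Rightarrow> real) \<Rightarrow> ('a \<Rightarrow> real \<Rightarrow> real) \<Rightarrow> (real \<Rightarrow> real) \<Rightarrow> real set \<Rightarrow> bool" where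
  "completely_serves S eta r d I \<longleftrightarrow> (AE t in lebesgue. t \<in> I \<longrightarrow> served S eta r t = d t)"

definition no_cross_charging :: "'a set \<Rightarrow> ('a \<Rightarrow> real \<Rightarrow> real) \<Rightarrow> real \<Rightarrow> bool" where
  "no_cross_charging S r T \<longleftrightarrow> (\<forall>i\<in>S. \<forall>t\<in>{0..T}. 0 \<le> r i t)"

end

theory Submission
  imports Defs
begin

(*
  Cross-charging never helps: charging a store at rate -r costs the others -r/eta >= -r, so any
  policy that serves d takes at least d(t) from the rates r_i(t) themselves.  Looking at the
  energies at a time s, the stores in S1 are full at time 0, each store in S2 can have lost at
  most P_i s, and together the stores have lost at least k s because d >= k.  Comparing with the
  threshold u0 (every S1 store is exhausted within any b >= u0, no S2 store within b < u0) this
  yields the tail condition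
    int_s^T d  <=  sum_i min (P_i (T - s)) (E_i(0))    for all s in [0,T].
  Conversely, the tail condition suffices without cross-charging: one store serves the slice of
  the increasing demand between a level c and c + P_i, with c chosen so that the store spends
  exactly its energy (or c = 0), and the residual demand is again increasing and satisfies the
  tail condition for the remaining stores, by concavity of  b -> sum_i min (P_i b) (E_i(0)).
*)

lemma integral_le_const_atLeastLessThan:
  fixes f :: "real \<Rightarrow> real"
  assumes f: "f integrable_on {a..b}" and "a \<le> b" and le: "\<And>t. t \<in> {a..<b} \<Longrightarrow> f t \<le> K"
  shows "integral {a..b} f \<le> K * (b - a)"
proof -
  let ?g = "\<lambda>t. if t = b then K else f t"
  have "integral {a..b} f = integral {a..b} ?g"
    by (rule integral_spike[of "{b}"]) auto
  also have "\<dots> \<le> integral {a..b} (\<lambda>_. K)"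
    by (rule integral_le[OF integrable_spike[OF f, of "{b}"]]) (auto simp: le)
  finally show ?thesis
    using \<open>a \<le> b\<close> by (simp add: mult.commute)
qed

lemma integral_ge_const_greaterThanAtMost:
  fixes f :: "real \<Rightarrow> real"
  assumes f: "f integrable_on {a..b}" and "a \<le> b" and ge: "\<And>t. t \<in> {a<..b} \<Longrightarrow> K \<le> f t"
  shows "K * (b - a) \<le> integral {a..b} f"
proof -
  let ?g = "\<lambda>t. if t = a then K else f t"
  have "K * (b - a) = integral {a..b} (\<lambda>_. K)"
    using \<open>a \<le> b\<close> by (simp add: mult.commute)
  also have "\<dots> \<le> integral {a..b} ?g"
    by (rule integral_le[OF _ integrable_spike[OF f, of "{a}"]]) (auto simp: ge)
  also have "\<dots> = integral {a..b} f"
    by (rule integral_spike[of "{a}"]) auto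
  finally show ?thesis .
qed

lemma mono_on_integrable_on_subinterval:
  fixes f :: "real \<Rightarrow> real"
  assumes "mono_on I f" "{a..b} \<subseteq> I"
  shows "f integrable_on {a..b}"
  by (rule integrable_on_mono_on, rule mono_on_subset[OF assms])

lemma borel_measurable_mono_on_extend_zero:
  fixes f :: "real \<Rightarrow> real"
  assumes "mono_on {a..b} f"
  shows "(\<lambda>t. if t \<in> {a..b} then f t else 0) \<in> borel_measurable lebesgue"
proof -
  have "f \<in> borel_measurable (restrict_space borel {a..b})"
    using assms by (rule borel_measurable_mono_on_fnc)
  then have "(\<lambda>t. indicator {a..b} t *\<^sub>R f t) \<in> borel_measurable borel"
    by (subst (asm) borel_measurable_restrict_space_iff) auto
  then have "(\<lambda>t. if t \<in> {a..b} then f t else 0) \<in> borel_measurable borel"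
    by (rule measurable_cong[THEN iffD1, rotated]) (auto simp: indicator_def)
  then show ?thesis
    by (simp add: measurable_completion)
qed

lemma mono_on_crossing_time:
  fixes f :: "real \<Rightarrow> real"
  assumes f: "mono_on {a..b} f" and "a \<le> b"
  obtains \<sigma> where "\<sigma> \<in> {a..b}"
    and "\<And>t. t \<in> {a..b} \<Longrightarrow> t < \<sigma> \<Longrightarrow> f t \<le> \<theta>"
    and "\<And>t. t \<in> {a..b} \<Longrightarrow> \<sigma> < t \<Longrightarrow> \<theta> < f t"
proof
  define X where "X = {t \<in> {a..b}. \<theta> < f t} \<union> {b}"
  have bdd: "bdd_below X"
    unfolding X_def using \<open>a \<le> b\<close> by (intro bdd_belowI[of _ a]) auto
  have "Inf X \<le> b"
    by (rule cInf_lower[OF _ bdd]) (simp add: X_def)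
  moreover have "a \<le> Inf X"
    using \<open>a \<le> b\<close> by (intro cInf_greatest) (auto simp: X_def)
  ultimately show "Inf X \<in> {a..b}" by simp
  show "f t \<le> \<theta>" if "t \<in> {a..b}" "t < Inf X" for t
  proof (rule ccontr)
    assume "\<not> f t \<le> \<theta>"
    then have "Inf X \<le> t"
      using that(1) by (intro cInf_lower[OF _ bdd]) (simp add: X_def)
    with that(2) show False by simp
  qed
  show "\<theta> < f t" if t: "t \<in> {a..b}" "Inf X < t" for t
  proof -
    obtain x where x: "x \<in> X" "x < t"
      using t(2) cInf_less_iff[OF _ bdd] by (auto simp: X_def)
    then have "x \<in> {a..b}" "\<theta> < f x"
      using t(1) by (auto simp: X_def)
    moreover have "f x \<le> f t"
      using f calculation(1) t(1) x(2) by (auto intro: mono_onD)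
    ultimately show ?thesis by simp
  qed
qed

section \<open>Serving the top slice of an increasing demand\<close>

definition top_slice :: "real \<Rightarrow> real \<Rightarrow> real \<Rightarrow> real" where
  "top_slice p c x = min p (max 0 (x - c))"

lemma top_slice_bounds: "0 \<le> p \<Longrightarrow> 0 \<le> top_slice p c x \<and> top_slice p c x \<le> p"
  by (simp add: top_slice_def)

lemma top_slice_mono: "x \<le> y \<Longrightarrow> top_slice p c x \<le> top_slice p c y"
  by (simp add: top_slice_def min.coboundedI2 min.mono)

lemma diff_top_slice_mono: "x \<le> y \<Longrightarrow> x - top_slice p c x \<le> y - top_slice p c y"
  by (auto simp: top_slice_def min_def max_def)

lemma top_slice_eq_0: "0 \<le> p \<Longrightarrow> x \<le> c \<Longrightarrow> top_slice p c x = 0"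
  by (simp add: top_slice_def)

lemma top_slice_eq_rate: "c + p < x \<Longrightarrow> top_slice p c x = p"
  by (simp add: top_slice_def)

lemma diff_top_slice_le_level: "0 \<le> p \<Longrightarrow> x \<le> c + p \<Longrightarrow> x - top_slice p c x \<le> c"
  by (auto simp: top_slice_def min_def max_def)

lemma diff_top_slice_ge_level: "0 \<le> p \<Longrightarrow> c \<le> x \<Longrightarrow> c \<le> x - top_slice p c x"
  by (auto simp: top_slice_def min_def max_def)

lemma top_slice_le_self: "0 \<le> x \<Longrightarrow> 0 \<le> c \<Longrightarrow> top_slice p c x \<le> x"
  by (auto simp: top_slice_def min_def max_def)

lemma top_slice_level_lipschitz: "top_slice p c x - top_slice p c' x \<le> \<bar>c - c'\<bar>"
  by (auto simp: top_slice_def min_def max_def)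

lemma mono_on_top_slice: "mono_on I f \<Longrightarrow> mono_on I (\<lambda>t. top_slice p c (f t))"
  by (simp add: mono_on_def top_slice_mono)

lemma mono_on_diff_top_slice: "mono_on I f \<Longrightarrow> mono_on I (\<lambda>t. f t - top_slice p c (f t))"
  by (simp add: mono_on_def diff_top_slice_mono)

definition max_deliverable :: "('a \<Rightarrow> real) \<Rightarrow> ('a \<Rightarrow> real) \<Rightarrow> 'a set \<Rightarrow> real \<Rightarrow> real" where
  "max_deliverable P E A b = (\<Sum>i\<in>A. min (P i * b) (E i))"

lemma max_deliverable_insert:
  "finite A \<Longrightarrow> n \<notin> A \<Longrightarrow>
    max_deliverable P E (insert n A) b = min (P n * b) (E n) + max_deliverable P E A b"
  by (simp add: max_deliverable_def)

lemma mono_max_deliverable: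
  assumes "\<And>i. i \<in> A \<Longrightarrow> 0 \<le> P i"
  shows "mono (max_deliverable P E A)"
proof (rule monoI)
  fix x y :: real
  assume "x \<le> y"
  then have "P i * x \<le> P i * y" if "i \<in> A" for i
    using assms that by (simp add: mult_left_mono)
  then show "max_deliverable P E A x \<le> max_deliverable P E A y"
    unfolding max_deliverable_def by (intro sum_mono) (simp add: min.coboundedI1)
qed

lemma concave_on_min_linear: "concave_on UNIV (\<lambda>x::real. min (p * x) e)"
proof (unfold concave_on_iff, intro conjI ballI allI impI)
  fix x y u v :: real
  assume uv: "0 \<le> u" "0 \<le> v" "u + v = 1"
  have "u * min (p * x) e \<le> u * (p * x)" "u * min (p * x) e \<le> u * e"
    "v * min (p * y) e \<le> v * (p * y)" "v * min (p * y) e \<le> v * e"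
    using uv by (simp_all add: mult_left_mono)
  moreover have "p * (u *\<^sub>R x + v *\<^sub>R y) = u * (p * x) + v * (p * y)"
    by (simp add: algebra_simps)
  moreover have "u * e + v * e = e"
    using uv by (metis distrib_right mult_1)
  ultimately show "u * min (p * x) e + v * min (p * y) e \<le> min (p * (u *\<^sub>R x + v *\<^sub>R y)) e"
    by linarith
qed simp

lemma concave_on_sum_fun:
  assumes "convex S" "\<And>i. i \<in> A \<Longrightarrow> concave_on S (f i)"
  shows "concave_on S (\<lambda>x. \<Sum>i\<in>A. f i x)"
proof (cases "finite A")
  case True
  then show ?thesis
    using assms(2) by (induction A rule: finite_induct) (auto intro: concave_on_add simp: concave_on_const assms(1))
qed (simp add: concave_on_const assms(1))

lemma concave_on_max_deliverable: "concave_on UNIV (max_deliverable P E A)"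
  unfolding max_deliverable_def[abs_def] by (intro concave_on_sum_fun concave_on_min_linear) simp

lemma le_concave_on_between_slopes:
  fixes F :: "real \<Rightarrow> real"
  assumes F: "concave_on S F" "x1 \<in> S" "x2 \<in> S" and x: "x2 \<le> x" "x \<le> x1"
    and le2: "I \<le> c * (x - x2) + F x2" and le1: "I \<le> F x1 - c * (x1 - x)"
  shows "I \<le> F x"
proof (cases "x1 = x2")
  case True
  then show ?thesis using x le1 by simp
next
  case False
  define l where "l = (x - x2) / (x1 - x2)"
  have l: "0 \<le> l" "l \<le> 1" "l * (x1 - x2) = x - x2"
    using x False by (auto simp: l_def field_simps)
  have x_eq: "(1 - l) *\<^sub>R x2 + l *\<^sub>R x1 = x"
    using l by (simp add: algebra_simps)
  have "I = (1 - l) * I + l * I"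
    by (simp add: algebra_simps)
  also have "\<dots> \<le> (1 - l) * (c * (x - x2) + F x2) + l * (F x1 - c * (x1 - x))"
    using l le1 le2 by (intro add_mono mult_left_mono) auto
  also have "\<dots> = (1 - l) * F x2 + l * F x1 + c * ((1 - l) * (x - x2) - l * (x1 - x))"
    by (simp add: algebra_simps)
  also have "(1 - l) * (x - x2) - l * (x1 - x) = 0"
    using l by (simp add: algebra_simps)
  also have "(1 - l) * F x2 + l * F x1 + c * 0 \<le> F x"
    using concave_onD[OF F(1), of l x2 x1] F(2,3) l x_eq by simp
  finally show ?thesis .
qed

lemma integral_tail_le_minus_const:
  fixes g :: "real \<Rightarrow> real"
  assumes g: "g integrable_on {a..T}" and "a \<le> s" "s \<le> T" and ge: "\<And>t. t \<in> {a<..s} \<Longrightarrow> c \<le> g t"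
  shows "integral {s..T} g \<le> integral {a..T} g - c * (s - a)"
proof -
  have "integral {a..s} g + integral {s..T} g = integral {a..T} g"
    using assms by (intro Henstock_Kurzweil_Integration.integral_combine) auto
  moreover have "c * (s - a) \<le> integral {a..s} g"
    using assms by (intro integral_ge_const_greaterThanAtMost integrable_subinterval_real[OF g]) auto
  ultimately show ?thesis
    by linarith
qed

lemma integral_diff_top_slice_le_late:
  fixes f F :: "real \<Rightarrow> real"
  assumes f: "mono_on {0..T} f" and "0 \<le> p" and s: "s \<in> {0..T}" and \<sigma>: "\<sigma> \<in> {0..T}"
    and below: "\<And>t. t \<in> {0..T} \<Longrightarrow> t < \<sigma> \<Longrightarrow> f t \<le> c + p"
    and above: "\<And>t. t \<in> {0..T} \<Longrightarrow> \<sigma> < t \<Longrightarrow> c + p < f t"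
    and tail: "integral {max s \<sigma>..T} f \<le> F (T - max s \<sigma>) + min (p * (T - max s \<sigma>)) E"
  shows "integral {s..T} (\<lambda>t. f t - top_slice p c (f t)) \<le> c * (max s \<sigma> - s) + F (T - max s \<sigma>)"
proof -
  define m where "m = max s \<sigma>"
  let ?r = "\<lambda>t. f t - top_slice p c (f t)"
  have m: "s \<le> m" "m \<le> T"
    using s \<sigma> by (auto simp: m_def)
  have r_int: "?r integrable_on {a..b}" if "{a..b} \<subseteq> {0..T}" for a b
    using mono_on_integrable_on_subinterval[OF mono_on_diff_top_slice[OF f] that] .
  have "integral {s..m} ?r + integral {m..T} ?r = integral {s..T} ?r"
    using Henstock_Kurzweil_Integration.integral_combine[OF m r_int] s by simp
  moreover have "integral {s..m} ?r \<le> c * (m - s)"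
    using s m \<open>0 \<le> p\<close>
    by (intro integral_le_const_atLeastLessThan r_int diff_top_slice_le_level below) (auto simp: m_def)
  moreover have "integral {m..T} ?r = integral {m..T} (\<lambda>t. f t - p)"
    by (rule integral_spike[of "{m}"]) (use s m in \<open>auto simp: m_def top_slice_eq_rate above\<close>)
  moreover have "integral {m..T} (\<lambda>t. f t - p) = integral {m..T} f - p * (T - m)"
    using mono_on_integrable_on_subinterval[OF f, of m T] s m by (subst integral_diff) (auto simp: mult.commute)
  moreover have "min (p * (T - m)) E \<le> p * (T - m)"
    by simp
  ultimately show ?thesis
    using tail unfolding m_def by linarith
qed

lemma integral_diff_top_slice_le_early:
  fixes f F :: "real \<Rightarrow> real"
  assumes f: "mono_on {0..T} f" and "0 \<le> p" and s: "s \<in> {0..T}" "s \<le> \<sigma>"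
    and below: "\<And>t. t \<in> {0..T} \<Longrightarrow> t < \<sigma> \<Longrightarrow> f t \<le> c"
    and tail: "integral {s..T} f \<le> F (T - s) + min (p * (T - s)) E"
    and level: "integral {0..T} (\<lambda>t. top_slice p c (f t)) = E"
  shows "integral {s..T} (\<lambda>t. f t - top_slice p c (f t)) \<le> F (T - s)"
proof -
  let ?q = "\<lambda>t. top_slice p c (f t)"
  have q_int: "?q integrable_on {a..b}" if "{a..b} \<subseteq> {0..T}" for a b
    using mono_on_integrable_on_subinterval[OF mono_on_top_slice[OF f] that] .
  have "integral {0..s} ?q = integral {0..s} (\<lambda>_. 0)"
    by (rule integral_spike[of "{s}"]) (use s \<open>0 \<le> p\<close> in \<open>auto intro!: top_slice_eq_0 below\<close>)
  then have "integral {0..T} ?q = integral {s..T} ?q"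
    using Henstock_Kurzweil_Integration.integral_combine[of 0 s T ?q] s q_int by simp
  then have "integral {s..T} (\<lambda>t. f t - ?q t) = integral {s..T} f - E"
    using s q_int mono_on_integrable_on_subinterval[OF f, of s T] level by (simp add: integral_diff)
  then show ?thesis
    using tail by linarith
qed

(*
  sigma1 and sigma2 are the times at which f crosses c and c + p.  Before sigma1 the slice is
  empty, after sigma2 it is the full rate p, and in between the residual is pinned at c; the bound
  at s between sigma1 and sigma2 interpolates the two others by concavity of F.
*)
lemma tail_condition_diff_top_slice:
  fixes f F :: "real \<Rightarrow> real"
  assumes f: "mono_on {0..T} f" and "0 \<le> T" "0 \<le> p" "0 \<le> c"
    and F: "mono_on {0..} F" "concave_on {0..} F"
    and tail: "\<And>s. s \<in> {0..T} \<Longrightarrow> integral {s..T} f \<le> F (T - s) + min (p * (T - s)) E"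
    and level: "0 < c \<Longrightarrow> integral {0..T} (\<lambda>t. top_slice p c (f t)) = E"
    and s: "s \<in> {0..T}"
  shows "integral {s..T} (\<lambda>t. f t - top_slice p c (f t)) \<le> F (T - s)"
proof -
  let ?r = "\<lambda>t. f t - top_slice p c (f t)"
  obtain \<sigma>1 where \<sigma>1: "\<sigma>1 \<in> {0..T}"
    "\<And>t. t \<in> {0..T} \<Longrightarrow> t < \<sigma>1 \<Longrightarrow> f t \<le> c" "\<And>t. t \<in> {0..T} \<Longrightarrow> \<sigma>1 < t \<Longrightarrow> c < f t"
    using mono_on_crossing_time[OF f \<open>0 \<le> T\<close>, where \<theta> = c] by blast
  obtain \<sigma>2 where \<sigma>2: "\<sigma>2 \<in> {0..T}"
    "\<And>t. t \<in> {0..T} \<Longrightarrow> t < \<sigma>2 \<Longrightarrow> f t \<le> c + p" "\<And>t. t \<in> {0..T} \<Longrightarrow> \<sigma>2 < t \<Longrightarrow> c + p < f t"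
    using mono_on_crossing_time[OF f \<open>0 \<le> T\<close>, where \<theta> = "c + p"] by blast
  have late: "integral {s..T} ?r \<le> c * (max s \<sigma>2 - s) + F (T - max s \<sigma>2)"
    using s \<sigma>2 tail[of "max s \<sigma>2"] by (intro integral_diff_top_slice_le_late[OF f \<open>0 \<le> p\<close>, where E = E]) auto
  have early: "integral {s'..T} ?r \<le> F (T - s')" if "s' \<in> {0..T}" "s' \<le> \<sigma>1" "0 < c" for s'
    using that level tail[of s'] by (intro integral_diff_top_slice_le_early[OF f \<open>0 \<le> p\<close> _ _ \<sigma>1(2), where E = E]) auto
  consider "c = 0" | "0 < c" "s \<le> \<sigma>1" | "\<sigma>2 \<le> s" | "0 < c" "\<sigma>1 < s" "s < \<sigma>2"
    using \<open>0 \<le> c\<close> by linarith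
  then show ?thesis
  proof cases
    case 1
    have "F (T - max s \<sigma>2) \<le> F (T - s)"
      using s \<sigma>2(1) by (intro mono_onD[OF F(1)]) auto
    then show ?thesis
      using late 1 by simp
  next
    case 2
    then show ?thesis
      using early s by blast
  next
    case 3
    then show ?thesis
      using late by simp
  next
    case 4
    have "integral {s..T} ?r \<le> integral {\<sigma>1..T} ?r - c * (s - \<sigma>1)"
    proof (rule integral_tail_le_minus_const)
      show "?r integrable_on {\<sigma>1..T}"
        using \<sigma>1(1) by (intro mono_on_integrable_on_subinterval[OF mono_on_diff_top_slice[OF f]]) auto
      show "c \<le> ?r t" if "t \<in> {\<sigma>1<..s}" for t
        using that s \<sigma>1(1) \<sigma>1(3)[of t] \<open>0 \<le> p\<close> by (intro diff_top_slice_ge_level) auto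
    qed (use 4 s in auto)
    then have le1: "integral {s..T} ?r \<le> F (T - \<sigma>1) - c * ((T - \<sigma>1) - (T - s))"
      using early[OF \<sigma>1(1) order_refl \<open>0 < c\<close>] by simp
    have le2: "integral {s..T} ?r \<le> c * ((T - s) - (T - \<sigma>2)) + F (T - \<sigma>2)"
      using late 4 by simp
    show ?thesis
      using le_concave_on_between_slopes[OF F(2) _ _ _ _ le2 le1] 4 s \<sigma>1(1) \<sigma>2(1) by simp
  qed
qed

lemma lipschitz_on_integral_top_slice_level:
  fixes f :: "real \<Rightarrow> real"
  assumes f: "mono_on {0..T} f" and "0 \<le> T"
  shows "T-lipschitz_on X (\<lambda>c. integral {0..T} (\<lambda>t. top_slice p c (f t)))"
proof (rule lipschitz_onI)
  let ?g = "\<lambda>c. integral {0..T} (\<lambda>t. top_slice p c (f t))"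
  have int: "(\<lambda>t. top_slice p c (f t)) integrable_on {0..T}" for c
    using mono_on_integrable_on_subinterval[OF mono_on_top_slice[OF f]] by simp
  have lip: "?g x - ?g y \<le> T * \<bar>x - y\<bar>" for x y
  proof -
    have "?g x - ?g y = integral {0..T} (\<lambda>t. top_slice p x (f t) - top_slice p y (f t))"
      using int by (simp add: integral_diff)
    also have "\<dots> \<le> integral {0..T} (\<lambda>_. \<bar>x - y\<bar>)"
      using int by (intro integral_le integrable_diff top_slice_level_lipschitz) auto
    finally show ?thesis
      using \<open>0 \<le> T\<close> by simp
  qed
  show "dist (?g x) (?g y) \<le> T * dist x y" for x y
    using lip[of x y] lip[of y x] by (simp add: dist_real_def abs_minus_commute abs_le_iff)
qed (use \<open>0 \<le> T\<close> in simp)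

lemma exists_top_slice_level:
  fixes f :: "real \<Rightarrow> real"
  assumes f: "mono_on {0..T} f" and "0 \<le> T" "0 \<le> p" "0 \<le> E"
  obtains c where "0 \<le> c" "integral {0..T} (\<lambda>t. top_slice p c (f t)) \<le> E"
    "0 < c \<Longrightarrow> integral {0..T} (\<lambda>t. top_slice p c (f t)) = E"
proof -
  define g where "g c = integral {0..T} (\<lambda>t. top_slice p c (f t))" for c
  consider "g 0 \<le> E" | "E < g 0" by linarith
  then show ?thesis
  proof cases
    case 1
    then show ?thesis using that[of 0] by (simp add: g_def)
  next
    case 2
    define m where "m = max 0 (f T)"
    have "g m = integral {0..T} (\<lambda>_. 0)"
      unfolding g_def using f \<open>0 \<le> T\<close> \<open>0 \<le> p\<close>
      by (intro integral_cong top_slice_eq_0) (auto simp: m_def intro!: max.coboundedI2 mono_onD[OF f])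
    then have "g m = 0" by simp
    moreover have "continuous_on {0..m} g"
      unfolding g_def[abs_def]
      by (rule lipschitz_on_continuous_on[OF lipschitz_on_integral_top_slice_level[OF f \<open>0 \<le> T\<close>]])
    ultimately have "\<exists>c. 0 \<le> c \<and> c \<le> m \<and> g c = E"
      using 2 \<open>0 \<le> E\<close> by (intro IVT2') (auto simp: m_def)
    then obtain c where "0 \<le> c" "g c = E"
      by blast
    then show ?thesis
      using that[of c] by (simp add: g_def)
  qed
qed

section \<open>Greedy schedules without cross-charging\<close>

(* Equality is only required on [0,T): the tail condition says nothing about f T, and one point is negligible. *)
definition discharge_schedule ::
  "'a set \<Rightarrow> ('a \<Rightarrow> real) \<Rightarrow> ('a \<Rightarrow> real) \<Rightarrow> (real \<Rightarrow> real) \<Rightarrow> real \<Rightarrow> ('a \<Rightarrow> real \<Rightarrow> real) \<Rightarrow> bool"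
  where
  "discharge_schedule A P E f T r \<longleftrightarrow>
     (\<forall>i\<in>A. \<forall>t\<in>{0..T}. 0 \<le> r i t \<and> r i t \<le> P i) \<and> (\<forall>i\<in>A. mono_on {0..T} (r i)) \<and>
     (\<forall>i\<in>A. integral {0..T} (r i) \<le> E i) \<and>
     (\<forall>t\<in>{0..T}. (\<Sum>i\<in>A. r i t) \<le> f t) \<and> (\<forall>t\<in>{0..<T}. (\<Sum>i\<in>A. r i t) = f t)"

lemma discharge_schedule_empty:
  fixes f :: "real \<Rightarrow> real"
  assumes f: "mono_on {0..T} f" "\<forall>t\<in>{0..T}. 0 \<le> f t"
    and tail: "\<forall>s\<in>{0..T}. integral {s..T} f \<le> 0"
  shows "discharge_schedule {} P E f T r"
proof -
  have "f t = 0" if t: "t \<in> {0..<T}" for t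
  proof -
    have "f t * (T - t) \<le> integral {t..T} f"
      using t by (intro integral_ge_const_greaterThanAtMost mono_on_integrable_on_subinterval[OF f(1)])
        (auto intro: mono_onD[OF f(1)])
    also have "\<dots> \<le> 0"
      using tail t by simp
    finally have "f t \<le> 0"
      using t by (simp add: mult_le_0_iff)
    moreover have "0 \<le> f t"
      using t f(2) by simp
    ultimately show ?thesis
      by simp
  qed
  then show ?thesis
    using f(2) by (auto simp: discharge_schedule_def)
qed

lemma discharge_schedule_insert:
  assumes r: "discharge_schedule A P E (\<lambda>t. f t - q t) T r" and "finite A" "n \<notin> A"
    and q: "mono_on {0..T} q" "integral {0..T} q \<le> E n" "\<And>t. 0 \<le> q t \<and> q t \<le> P n"
  shows "discharge_schedule (insert n A) P E f T (r(n := q))"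
proof -
  have "(\<Sum>i\<in>A. (r(n := q)) i t) = (\<Sum>i\<in>A. r i t)" for t
    using \<open>n \<notin> A\<close> by (intro sum.cong) auto
  then have "(\<Sum>i\<in>insert n A. (r(n := q)) i t) = q t + (\<Sum>i\<in>A. r i t)" for t
    using \<open>finite A\<close> \<open>n \<notin> A\<close> by simp
  then show ?thesis
    using r q unfolding discharge_schedule_def by auto
qed

lemma discharge_schedule_exists:
  fixes P E :: "'a \<Rightarrow> real" and f :: "real \<Rightarrow> real"
  assumes "finite A" "0 \<le> T" "\<forall>i\<in>A. 0 \<le> P i \<and> 0 \<le> E i"
    and "mono_on {0..T} f" "\<forall>t\<in>{0..T}. 0 \<le> f t"
    and "\<forall>s\<in>{0..T}. integral {s..T} f \<le> max_deliverable P E A (T - s)"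
  shows "\<exists>r. discharge_schedule A P E f T r"
  using assms(1,3-6)
proof (induction A arbitrary: f rule: finite_induct)
  case empty
  then show ?case
    using discharge_schedule_empty by (fastforce simp: max_deliverable_def)
next
  case (insert n A)
  have Pn: "0 \<le> P n" "0 \<le> E n"
    using insert.prems(1) by auto
  obtain c where c: "0 \<le> c" "integral {0..T} (\<lambda>t. top_slice (P n) c (f t)) \<le> E n"
    "0 < c \<Longrightarrow> integral {0..T} (\<lambda>t. top_slice (P n) c (f t)) = E n"
    using exists_top_slice_level[OF insert.prems(2) \<open>0 \<le> T\<close> Pn] by blast
  define q where "q = (\<lambda>t. top_slice (P n) c (f t))"
  have F: "mono_on {0..} (max_deliverable P E A)" "concave_on {0..} (max_deliverable P E A)"
    using insert.prems(1) concave_on_max_deliverable[of P E A]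
    by (auto intro: mono_imp_mono_on mono_max_deliverable simp: concave_on_def convex_on_subset)
  have "\<exists>r. discharge_schedule A P E (\<lambda>t. f t - q t) T r"
  proof (rule insert.IH)
    show "\<forall>i\<in>A. 0 \<le> P i \<and> 0 \<le> E i"
      using insert.prems(1) by simp
    show "mono_on {0..T} (\<lambda>t. f t - q t)"
      unfolding q_def by (rule mono_on_diff_top_slice[OF insert.prems(2)])
    show "\<forall>t\<in>{0..T}. 0 \<le> f t - q t"
      using insert.prems(3) c(1) by (simp add: q_def top_slice_le_self)
    show "\<forall>s\<in>{0..T}. integral {s..T} (\<lambda>t. f t - q t) \<le> max_deliverable P E A (T - s)"
      using insert.prems(4) insert.hyps c unfolding q_def
      by (intro ballI tail_condition_diff_top_slice[OF insert.prems(2) \<open>0 \<le> T\<close> Pn(1) c(1) F])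
         (auto simp: max_deliverable_insert add.commute)
  qed
  then obtain r where r: "discharge_schedule A P E (\<lambda>t. f t - q t) T r"
    by blast
  have q: "mono_on {0..T} q" "integral {0..T} q \<le> E n" "\<And>t. 0 \<le> q t \<and> q t \<le> P n"
    using mono_on_top_slice[OF insert.prems(2)] c(2) top_slice_bounds[OF Pn(1)] by (simp_all add: q_def)
  show ?case
    using discharge_schedule_insert[OF r insert.hyps q] by blast
qed

lemma discharge_schedule_imp_policy:
  assumes sched: "discharge_schedule S P E0 d T r"
    and stores: "\<forall>i\<in>S. 0 \<le> P' i \<and> 0 \<le> E0 i \<and> E0 i \<le> Ebar i"
  shows "\<exists>r. policy S Ebar P P' eta E0 d T r \<and> no_cross_charging S r T
             \<and> completely_serves S eta r d {0..T}"
proof -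
  define r' where "r' = (\<lambda>i t. if t \<in> {0..T} then r i t else 0)"
  have r: "\<forall>i\<in>S. \<forall>t\<in>{0..T}. 0 \<le> r i t \<and> r i t \<le> P i" "\<forall>i\<in>S. mono_on {0..T} (r i)"
    "\<forall>i\<in>S. integral {0..T} (r i) \<le> E0 i" "\<forall>t\<in>{0..T}. (\<Sum>i\<in>S. r i t) \<le> d t"
    "\<forall>t\<in>{0..<T}. (\<Sum>i\<in>S. r i t) = d t"
    using sched by (simp_all add: discharge_schedule_def)
  have energy_bounds: "0 \<le> energy E0 r' i t \<and> energy E0 r' i t \<le> Ebar i" if i: "i \<in> S" and t: "t \<in> {0..T}" for i t
  proof -
    have int: "r i integrable_on {a..b}" if "{a..b} \<subseteq> {0..T}" for a b
      using mono_on_integrable_on_subinterval r(2) i that by blast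
    have "integral {0..t} (r' i) = integral {0..t} (r i)"
      using t by (intro integral_cong) (simp add: r'_def)
    moreover have "0 \<le> integral {0..t} (r i)"
      using r(1) i t int by (intro integral_nonneg) auto
    moreover have "integral {0..t} (r i) \<le> integral {0..T} (r i)"
      using r(1) i t int by (intro integral_subset_le) auto
    ultimately show ?thesis
      using r(3) stores i unfolding energy_def by fastforce
  qed
  have served: "served S eta r' t = (\<Sum>i\<in>S. r i t)" if "t \<in> {0..T}" for t
    unfolding served_def using that r(1) by (intro sum.cong) (auto simp: r'_def)
  have "policy S Ebar P P' eta E0 d T r'"
    unfolding policy_def
  proof (intro conjI ballI)
    fix i assume i: "i \<in> S"
    show "r' i \<in> borel_measurable lebesgue"
      using borel_measurable_mono_on_extend_zero r(2) i by (simp add: r'_def)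
    fix t assume "t \<in> {0..T}"
    then show "0 \<le> energy E0 r' i t" "energy E0 r' i t \<le> Ebar i" "- P' i \<le> r' i t" "r' i t \<le> P i"
      using energy_bounds i r(1) stores by (auto simp: r'_def intro: order_trans[of _ 0])
  next
    fix t assume "t \<in> {0..T}"
    then show "0 \<le> served S eta r' t" "served S eta r' t \<le> d t"
      using served r(1,4) by (auto intro: sum_nonneg)
  qed
  moreover have "no_cross_charging S r' T"
    using r(1) by (simp add: no_cross_charging_def r'_def)
  moreover have "completely_serves S eta r' d {0..T}"
    unfolding completely_serves_def eventually_ae_filter_negligible
    using served r(5) by (intro exI[of _ "{T}"]) fastforce
  ultimately show ?thesis
    by blast
qed

section \<open>Necessity of the tail condition\<close>

lemma served_le_sum_rates:
  assumes "\<forall>i\<in>S. 0 < eta i \<and> eta i \<le> 1"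
  shows "served S eta r t \<le> (\<Sum>i\<in>S. r i t)"
  unfolding served_def
proof (rule sum_mono)
  fix i assume "i \<in> S"
  then show "(if 0 \<le> r i t then r i t else r i t / eta i) \<le> r i t"
    using assms by (auto simp: divide_le_eq mult_le_cancel_left1)
qed

lemma policy_rate_integrable:
  assumes pol: "policy S Ebar P P' eta E0 d T r" and "i \<in> S" and ab: "{a..b} \<subseteq> {0..T}"
  shows "r i integrable_on {a..b}"
proof (rule measurable_bounded_by_integrable_imp_integrable[where g = "\<lambda>_. max (P i) (P' i)"])
  show "r i \<in> borel_measurable (lebesgue_on {a..b})"
    using pol \<open>i \<in> S\<close> by (auto simp: policy_def intro: measurable_restrict_space1)
  show "norm (r i t) \<le> max (P i) (P' i)" if "t \<in> {a..b}" for t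
  proof -
    have "t \<in> {0..T}"
      using that ab by auto
    then have "- P' i \<le> r i t" "r i t \<le> P i"
      using pol \<open>i \<in> S\<close> by (auto simp: policy_def)
    then show ?thesis
      by (simp add: abs_le_iff max_def)
  qed
qed auto

lemma integral_demand_le_sum_integrals:
  assumes "finite S" and eta: "\<forall>i\<in>S. 0 < eta i \<and> eta i \<le> 1"
    and pol: "policy S Ebar P P' eta E0 d T r" and cs: "completely_serves S eta r d {0..T}"
    and d: "d integrable_on {a..b}" and ab: "{a..b} \<subseteq> {0..T}"
  shows "integral {a..b} d \<le> (\<Sum>i\<in>S. integral {a..b} (r i))"
proof -
  obtain N where N: "negligible N" "\<And>t. t \<notin> N \<Longrightarrow> t \<in> {0..T} \<Longrightarrow> served S eta r t = d t"
    using cs unfolding completely_serves_def eventually_ae_filter_negligible by blast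
  let ?g = "\<lambda>t. if t \<in> N then (\<Sum>i\<in>S. r i t) else d t"
  have r_int: "r i integrable_on {a..b}" if "i \<in> S" for i
    using policy_rate_integrable[OF pol that ab] .
  have "integral {a..b} d = integral {a..b} ?g"
    by (rule integral_spike[OF N(1)]) auto
  also have "\<dots> \<le> integral {a..b} (\<lambda>t. \<Sum>i\<in>S. r i t)"
  proof (rule integral_le)
    show "?g integrable_on {a..b}"
      by (rule integrable_spike[OF d N(1)]) auto
    show "(\<lambda>t. \<Sum>i\<in>S. r i t) integrable_on {a..b}"
      using r_int by (intro integrable_sum \<open>finite S\<close>) auto
    show "?g t \<le> (\<Sum>i\<in>S. r i t)" if "t \<in> {a..b}" for t
      using that ab N(2)[of t] served_le_sum_rates[OF eta, of r t] by auto
  qed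
  also have "\<dots> = (\<Sum>i\<in>S. integral {a..b} (r i))"
    using r_int by (intro integral_sum \<open>finite S\<close>) auto
  finally show ?thesis .
qed

lemma max_deliverable_drained_le:
  fixes P E x :: "'a \<Rightarrow> real"
  assumes "finite S" "S1 \<subseteq> S" "0 \<le> s" "\<forall>i\<in>S. 0 \<le> P i"
    and kept: "\<forall>i\<in>S1. x i \<le> E i" and drained: "\<forall>i\<in>S - S1. E i - x i \<le> P i * s"
    and total: "(\<Sum>i\<in>S. x i) \<le> (\<Sum>i\<in>S. E i) - (\<Sum>i\<in>S - S1. P i) * s"
    and "(\<forall>i\<in>S1. E i \<le> P i * b) \<or> (\<forall>i\<in>S - S1. P i * b \<le> E i)"
  shows "max_deliverable P x S b \<le> max_deliverable P E S b"
  using assms(8)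
proof
  assume S2_le: "\<forall>i\<in>S - S1. P i * b \<le> E i"
  show ?thesis
    unfolding max_deliverable_def
  proof (rule sum_mono)
    fix i assume "i \<in> S"
    then show "min (P i * b) (x i) \<le> min (P i * b) (E i)"
      using kept S2_le by (cases "i \<in> S1") auto
  qed
next
  assume S1_le: "\<forall>i\<in>S1. E i \<le> P i * b"
  define \<delta> where "\<delta> i = x i - E i + (if i \<in> S1 then 0 else P i * s)" for i
  have "max_deliverable P x S b \<le> (\<Sum>i\<in>S. min (P i * b) (E i) + \<delta> i)"
    unfolding max_deliverable_def
  proof (rule sum_mono)
    fix i assume i: "i \<in> S"
    show "min (P i * b) (x i) \<le> min (P i * b) (E i) + \<delta> i"
    proof (cases "i \<in> S1")
      case True
      then show ?thesis
        using S1_le by (auto simp: \<delta>_def min_def)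
    next
      case False
      then have "E i - x i \<le> P i * s" "0 \<le> P i * s"
        using i drained assms(3,4) by auto
      then show ?thesis
        using False by (auto simp: \<delta>_def min_def)
    qed
  qed
  also have "\<dots> = max_deliverable P E S b + ((\<Sum>i\<in>S. x i) - (\<Sum>i\<in>S. E i) + (\<Sum>i\<in>S - S1. P i) * s)"
    using \<open>finite S\<close> \<open>S1 \<subseteq> S\<close>
    by (simp add: max_deliverable_def \<delta>_def sum.distrib sum_subtractf sum_distrib_right sum.If_cases Diff_eq)
  finally show ?thesis
    using total by linarith
qed

lemma tail_demand_le_max_deliverable:
  fixes S S1 :: "'a set"
  assumes "finite S" and stores: "\<forall>i\<in>S. 0 < P i \<and> 0 < eta i \<and> eta i \<le> 1"
    and pol: "policy S Ebar P P' eta E0 d T r" and cs: "completely_serves S eta r d {0..T}"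
    and d: "mono_on {0..T} d" "\<And>t. t \<in> {0..T} \<Longrightarrow> (\<Sum>i\<in>S - S1. P i) \<le> d t"
    and "S1 \<subseteq> S" and full: "\<forall>i\<in>S1. E0 i = Ebar i"
    and dichotomy: "\<And>b. (\<forall>i\<in>S1. E0 i \<le> P i * b) \<or> (\<forall>i\<in>S - S1. P i * b \<le> E0 i)"
    and s: "s \<in> {0..T}"
  shows "integral {s..T} d \<le> max_deliverable P E0 S (T - s)"
proof -
  define x where "x i = energy E0 r i s" for i
  have eta: "\<forall>i\<in>S. 0 < eta i \<and> eta i \<le> 1"
    using stores by simp
  have r_int: "r i integrable_on {a..b}" if "i \<in> S" "{a..b} \<subseteq> {0..T}" for i a b
    using policy_rate_integrable[OF pol that] .
  have demand_le: "integral {a..b} d \<le> (\<Sum>i\<in>S. integral {a..b} (r i))" if "{a..b} \<subseteq> {0..T}" for a b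
    using integral_demand_le_sum_integrals[OF \<open>finite S\<close> eta pol cs _ that]
      mono_on_integrable_on_subinterval[OF d(1) that] by blast
  have bounds: "0 \<le> energy E0 r i t \<and> energy E0 r i t \<le> Ebar i" "- P' i \<le> r i t \<and> r i t \<le> P i"
    if "i \<in> S" "t \<in> {0..T}" for i t
    using pol that by (auto simp: policy_def)
  have split: "integral {0..s} (r i) + integral {s..T} (r i) = integral {0..T} (r i)" if "i \<in> S" for i
    using s r_int[OF that, of 0 T] by (intro Henstock_Kurzweil_Integration.integral_combine) auto
  have "integral {s..T} d \<le> (\<Sum>i\<in>S. integral {s..T} (r i))"
    using demand_le s by simp
  also have "\<dots> \<le> max_deliverable P x S (T - s)"
    unfolding max_deliverable_def
  proof (intro sum_mono min.boundedI)
    fix i assume i: "i \<in> S"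
    show "integral {s..T} (r i) \<le> P i * (T - s)"
      using s i bounds by (intro integral_le_const_atLeastLessThan r_int) auto
    show "integral {s..T} (r i) \<le> x i"
      using split[OF i] bounds(1)[OF i, of T] s by (simp add: x_def energy_def)
  qed
  also have "\<dots> \<le> max_deliverable P E0 S (T - s)"
  proof (rule max_deliverable_drained_le[OF \<open>finite S\<close> \<open>S1 \<subseteq> S\<close> _ _ _ _ _ dichotomy])
    show "0 \<le> s" "\<forall>i\<in>S. 0 \<le> P i"
      using s stores by auto
    show "\<forall>i\<in>S1. x i \<le> E0 i"
      using full bounds(1) s \<open>S1 \<subseteq> S\<close> by (auto simp: x_def)
    show "\<forall>i\<in>S - S1. E0 i - x i \<le> P i * s"
      using s bounds(2) by (auto simp: x_def energy_def intro!: integral_le_const_atLeastLessThan[where a = 0, simplified] r_int)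
    have "(\<Sum>i\<in>S - S1. P i) * (s - 0) \<le> integral {0..s} d"
      using s d by (intro integral_ge_const_greaterThanAtMost mono_on_integrable_on_subinterval[OF d(1)]) auto
    then show "(\<Sum>i\<in>S. x i) \<le> (\<Sum>i\<in>S. E0 i) - (\<Sum>i\<in>S - S1. P i) * s"
      using demand_le[of 0 s] s by (simp add: x_def energy_def sum_subtractf)
  qed
  finally show ?thesis .
qed

lemma S1_full:
  fixes S S' S1 :: "'a set" and u0 :: ereal
  assumes "finite S" "\<forall>i\<in>S. 0 < P i \<and> E0 i \<le> Ebar i"
    and S': "S' = {i\<in>S. E0 i < Ebar i}"
    and u0: "u0 = (if S' = {} then \<infinity> else ereal (Min ((\<lambda>i. E0 i / P i) ` S')))"
    and S1: "S1 = {i\<in>S. ereal (Ebar i / P i) \<le> u0}"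
    and i: "i \<in> S1"
  shows "E0 i = Ebar i"
proof (rule ccontr)
  assume "E0 i \<noteq> Ebar i"
  with i assms(2) have "i \<in> S'" "0 < P i" "E0 i < Ebar i"
    unfolding S' S1 by force+
  then have "u0 \<le> ereal (E0 i / P i)"
    using \<open>finite S\<close> unfolding u0 S' by auto
  also have "E0 i / P i < Ebar i / P i"
    using \<open>0 < P i\<close> \<open>E0 i < Ebar i\<close> by (rule divide_strict_right_mono[rotated])
  finally show False
    using i unfolding S1 by auto
qed

lemma S1_S2_dichotomy:
  fixes S S' S1 :: "'a set" and u0 :: ereal
  assumes "finite S" and stores: "\<forall>i\<in>S. 0 < P i \<and> E0 i \<le> Ebar i"
    and S': "S' = {i\<in>S. E0 i < Ebar i}"
    and u0: "u0 = (if S' = {} then \<infinity> else ereal (Min ((\<lambda>i. E0 i / P i) ` S')))"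
    and S1: "S1 = {i\<in>S. ereal (Ebar i / P i) \<le> u0}"
  shows "(\<forall>i\<in>S1. E0 i \<le> P i * b) \<or> (\<forall>i\<in>S - S1. P i * b \<le> E0 i)"
proof (cases "u0 \<le> ereal b")
  case True
  have "E0 i \<le> P i * b" if i: "i \<in> S1" for i
  proof -
    have "ereal (Ebar i / P i) \<le> u0"
      using i unfolding S1 by simp
    then have "ereal (Ebar i / P i) \<le> ereal b"
      using True by (rule order_trans)
    then have "Ebar i \<le> P i * b"
      using i stores unfolding S1 by (auto simp: pos_divide_le_eq mult.commute)
    then show ?thesis
      using S1_full[OF \<open>finite S\<close> stores S' u0 S1 i] by simp
  qed
  then show ?thesis by blast
next
  case False
  have "P i * b \<le> E0 i" if i: "i \<in> S - S1" for i
  proof -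
    have "b < E0 i / P i"
    proof (cases "E0 i < Ebar i")
      case True
      then have "u0 \<le> ereal (E0 i / P i)"
        using i \<open>finite S\<close> unfolding u0 S' by auto
      then have "ereal b < ereal (E0 i / P i)"
        using \<open>\<not> u0 \<le> ereal b\<close> by (meson not_le order_less_le_trans)
      then show ?thesis
        by simp
    next
      case False
      then have "E0 i = Ebar i"
        using i stores by force
      moreover have "u0 < ereal (Ebar i / P i)"
        using i unfolding S1 by auto
      moreover have "ereal b < u0"
        using \<open>\<not> u0 \<le> ereal b\<close> by simp
      ultimately show ?thesis
        using less_trans[of "ereal b" u0 "ereal (Ebar i / P i)"] by simp
    qed
    then show ?thesis
      using i stores by (simp add: less_divide_eq mult.commute)
  qed
  then show ?thesis by blast
qed

theorem theorem4:
  fixes S :: "'a set"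
    and Ebar P P' eta E0 :: "'a \<Rightarrow> real"
    and d :: "real \<Rightarrow> real" and T :: real
    and S' S1 S2 :: "'a set" and u0 :: ereal and k :: real
  assumes "finite S"
    and "\<forall>i\<in>S. 0 < Ebar i \<and> 0 < P i \<and> 0 \<le> P' i \<and> 0 < eta i \<and> eta i \<le> 1"
    and "\<forall>i\<in>S. 0 \<le> E0 i \<and> E0 i \<le> Ebar i"
    and "S' = {i\<in>S. E0 i < Ebar i}"
    and "u0 = (if S' = {} then \<infinity> else ereal (Min ((\<lambda>i. E0 i / P i) ` S')))"
    and "S1 = {i\<in>S. ereal (Ebar i / P i) \<le> u0}"
    and "S2 = S - S1"
    and "k = (\<Sum>i\<in>S2. P i)"
    and "T > 0"
    and "\<forall>t\<in>{0..T}. 0 \<le> d t"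
    and "set_integrable lborel {0..T} d"
    and "mono_on {0..T} d"
    and "d 0 \<ge> k"
    and "\<exists>r. policy S Ebar P P' eta E0 d T r \<and> completely_serves S eta r d {0..T}"
  shows "\<exists>r. policy S Ebar P P' eta E0 d T r \<and> no_cross_charging S r T
             \<and> completely_serves S eta r d {0..T}"
proof -
  obtain r where pol: "policy S Ebar P P' eta E0 d T r" and cs: "completely_serves S eta r d {0..T}"
    using assms(14) by blast
  have stores: "\<forall>i\<in>S. 0 < P i \<and> E0 i \<le> Ebar i"
    using assms(2,3) by simp
  have tail: "\<forall>s\<in>{0..T}. integral {s..T} d \<le> max_deliverable P E0 S (T - s)"
  proof
    fix s assume s: "s \<in> {0..T}"
    show "integral {s..T} d \<le> max_deliverable P E0 S (T - s)"
    proof (rule tail_demand_le_max_deliverable[OF assms(1) _ pol cs assms(12) _ _ _ _ s])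
      show "\<forall>i\<in>S. 0 < P i \<and> 0 < eta i \<and> eta i \<le> 1" "S1 \<subseteq> S"
        using assms(2,6) by auto
      show "(\<Sum>i\<in>S - S1. P i) \<le> d t" if "t \<in> {0..T}" for t
        using mono_onD[OF assms(12), of 0 t] that assms(7,8,13) by auto
      show "\<forall>i\<in>S1. E0 i = Ebar i"
        using S1_full[OF assms(1) stores assms(4-6)] by blast
      show "(\<forall>i\<in>S1. E0 i \<le> P i * b) \<or> (\<forall>i\<in>S - S1. P i * b \<le> E0 i)" for b
        using S1_S2_dichotomy[OF assms(1) stores assms(4-6)] .
    qed
  qed
  obtain r0 where "discharge_schedule S P E0 d T r0"
    using discharge_schedule_exists[OF assms(1) _ _ assms(12,10) tail] assms(2,3,9) by force
  then show ?thesis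
    using discharge_schedule_imp_policy assms(2,3) by blast
qed

end
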